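(* Let $n\ge2$ and let $F:\mathbf{R}^n\to\mathbf{R}$ be an integrand. (i) $\mathcal{D}(F)$ is the support function of $K_F$, i.e. $\mathcal{D}(F)(x)=\sup_{y\in K_F}\langle x,y\rangle$ for all $x\in\mathbf{R}^n$; in particular $\mathcal{D}(F)$ is convex. Moreover, if $G:\mathbf{R}^n\to\mathbf{R}$ is any convex, 1-homogeneous, positive function with $G\le F$, then $G\le\mathcal{D}(F)$. (ii) For every $v\in\mathbb{S}^{n-1}$ and $\overline{x}\in K_F$ the following are equivalent: (a) $\mathcal{D}(F)(v)=\langle v,\overline{x}\rangle$; (b) $\overline{x}\in\mathcal{D}(F)(v)v+v^\perp$; (c) $\overline{x}+v^\perp$ is a supporting hyperplane for $K_F$. (iii) $\mathrm{Ort}(\partial K_F)\subseteq\mathrm{Cont}(F)$.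
   Context: $\mathbb{S}^{n-1}$ is the unit sphere. A function $G$ is 1-homogeneous if $G(\lambda x)=\lambda G(x)$ for $\lambda\ge0$, positive if $G>0$ on $\mathbb{S}^{n-1}$; an integrand is a lower semicontinuous, 1-homogeneous, positive function. $K_F:=\bigcap_{v\in\mathbb{S}^{n-1}}\{z:\langle z,v\rangle\le F(v)\}$. Operators: $\mathcal{W}(F)(v):=\inf_{w\in\mathbb{S}^{n-1},\langle v,w\rangle>0}F(w)/\langle v,w\rangle$, $\mathcal{A}(G)(v):=\sup_{w\in\mathbb{S}^{n-1}}G(w)\langle v,w\rangle$ for $v\in\mathbb{S}^{n-1}$, extended by 1-homogeneity; $\mathcal{D}(F):=\mathcal{A}(\mathcal{W}(F))$. $\mathrm{Cont}(F):=\{x:F(x)=\mathcal{D}(F)(x)\}$. For $u\ne0$, "$\overline{x}+u^\perp$ is a supporting hyperplane for $K_F$" means $\overline{x}+u^\perp=\{z:\langle z,u\rangle=\max_{y\in K_F}\langle y,u\rangle\}$. For convex $K$ and $y\in\partial K$, $\mathcal{N}_y\partial K:=\{N:\langle N,z-y\rangle\le0\ \forall z\in K\}$; if $\mathcal{N}_y\partial K\cap\mathbb{S}^{n-1}$ is a singleton its element is $N_{\partial K}(y)$; $\mathrm{Ort}(\partial K):=\{v\ne0:\exists y\in\partial K,\ N_{\partial K}(y)\text{ defined and } =v/|v|\}$. *)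

theory Defs
  imports "HOL-Analysis.Analysis"
begin

definition lsc :: "('a::euclidean_space \<Rightarrow> real) \<Rightarrow> bool" where
  "lsc F \<longleftrightarrow> (\<forall>x. \<forall>e>0. eventually (\<lambda>y. F x - e < F y) (at x))"

definition homog1 :: "('a::euclidean_space \<Rightarrow> real) \<Rightarrow> bool" where
  "homog1 G \<longleftrightarrow> (\<forall>x. \<forall>l::real. l \<ge> 0 \<longrightarrow> G (l *\<^sub>R x) = l * G x)"

definition positive_fn :: "('a::euclidean_space \<Rightarrow> real) \<Rightarrow> bool" where
  "positive_fn G \<longleftrightarrow> (\<forall>v \<in> sphere 0 1. G v > 0)"

definition integrand :: "('a::euclidean_space \<Rightarrow> real) \<Rightarrow> bool" where
  "integrand F \<longleftrightarrow> lsc F \<and> homog1 F \<and> positive_fn F"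

definition KF :: "('a::euclidean_space \<Rightarrow> real) \<Rightarrow> 'a set" where
  "KF F = (\<Inter>v \<in> sphere 0 1. {z. z \<bullet> v \<le> F v})"

definition hom_ext :: "('a::euclidean_space \<Rightarrow> real) \<Rightarrow> 'a \<Rightarrow> real" where
  "hom_ext g x = (if x = 0 then 0 else norm x * g (x /\<^sub>R norm x))"

definition Wop :: "('a::euclidean_space \<Rightarrow> real) \<Rightarrow> 'a \<Rightarrow> real" where
  "Wop F = hom_ext (\<lambda>v. Inf {F w / (v \<bullet> w) | w. w \<in> sphere 0 1 \<and> v \<bullet> w > 0})"

definition Aop :: "('a::euclidean_space \<Rightarrow> real) \<Rightarrow> 'a \<Rightarrow> real" where
  "Aop G = hom_ext (\<lambda>v. Sup {G w * (v \<bullet> w) | w. w \<in> sphere 0 1})"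

definition Dop :: "('a::euclidean_space \<Rightarrow> real) \<Rightarrow> 'a \<Rightarrow> real" where
  "Dop F = Aop (Wop F)"

definition Cont :: "('a::euclidean_space \<Rightarrow> real) \<Rightarrow> 'a set" where
  "Cont F = {x. F x = Dop F x}"

text \<open>\<open>xb + u\<^sup>\<perp>\<close> is a supporting hyperplane for K (the maximum is attained).\<close>
definition supporting_hyperplane :: "'a::euclidean_space set \<Rightarrow> 'a \<Rightarrow> 'a \<Rightarrow> bool" where
  "supporting_hyperplane K xb u \<longleftrightarrow> u \<noteq> 0 \<and>
     (\<exists>m. (\<exists>y\<in>K. y \<bullet> u = m) \<and> (\<forall>y\<in>K. y \<bullet> u \<le> m) \<and>
          {xb + w | w. w \<bullet> u = 0} = {z. z \<bullet> u = m})"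

definition normal_cone :: "'a::euclidean_space set \<Rightarrow> 'a \<Rightarrow> 'a set" where
  "normal_cone K y = {N. \<forall>z\<in>K. N \<bullet> (z - y) \<le> 0}"

definition Ort :: "'a::euclidean_space set \<Rightarrow> 'a set" where
  "Ort K = {v. v \<noteq> 0 \<and> (\<exists>y \<in> frontier K. normal_cone K y \<inter> sphere 0 1 = {v /\<^sub>R norm v})}"

end

theory Submission
  imports Defs
begin

(* For a unit vector w and r \<ge> 0 one has r w \<in> K_F iff r \<le> W(F)(w): W(F) is the radial
   function of K_F. Hence a point y = |y| w of K_F with <v, y> > 0 satisfies
   <v, y> \<le> W(F)(w) <v, w>, while W(F)(w) w \<in> K_F; so A(W(F)) is the support function h
   of K_F, and convexity of h and part (ii) are elementary. A convex 1-homogeneous G has at each x a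
   linear minorant g with <g, x> = G x (separate its epigraph from the open ray below (x, G x));
   if G \<le> F then g \<in> K_F, so G x \<le> h x.
   For (iii), at a boundary point y of K_F some constraint <y, w> \<le> F w is tight: otherwise the
   slack F w - <y, w>, lower semicontinuous and positive on the compact sphere, would have a
   positive lower bound d, and the ball of radius d about y would lie in K_F. Such a w is a unit
   outer normal at y, hence the unique one v/|v|, and F(v) = |v| <y, w> \<le> h(v) \<le> F(v). *)

definition support_fun :: "'a::real_inner set \<Rightarrow> 'a \<Rightarrow> real" where
  "support_fun K x = Sup ((\<lambda>y. x \<bullet> y) ` K)"

lemma bdd_above_inner_image:
  fixes K :: "'a::real_inner set"
  assumes "bounded K"
  shows "bdd_above ((\<lambda>y. x \<bullet> y) ` K)"
  using assms by (intro bounded_imp_bdd_above bounded_linear_image bounded_linear_inner_right)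

lemma support_fun_upper:
  fixes K :: "'a::real_inner set"
  assumes "bounded K" "y \<in> K"
  shows "x \<bullet> y \<le> support_fun K x"
  unfolding support_fun_def using assms by (intro cSup_upper bdd_above_inner_image) auto

lemma support_fun_least:
  assumes "K \<noteq> {}" "\<And>y. y \<in> K \<Longrightarrow> x \<bullet> y \<le> c"
  shows "support_fun K x \<le> c"
  unfolding support_fun_def using assms by (intro cSup_least) auto

lemma homog1_support_fun:
  fixes K :: "'a::euclidean_space set"
  assumes "bounded K" "K \<noteq> {}"
  shows "homog1 (support_fun K)"
  unfolding homog1_def
proof (intro allI impI)
  fix x :: 'a and l :: real
  assume "l \<ge> 0"
  then have "l * Sup ((\<lambda>y. x \<bullet> y) ` K) = Sup ((*) l ` (\<lambda>y. x \<bullet> y) ` K)"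
    using assms by (intro continuous_at_Sup_mono monoI mult_left_mono continuous_intros
        bdd_above_inner_image) auto
  then show "support_fun K (l *\<^sub>R x) = l * support_fun K x"
    by (simp add: support_fun_def image_image)
qed

lemma convex_on_support_fun:
  fixes K :: "'a::real_inner set"
  assumes "bounded K" "K \<noteq> {}"
  shows "convex_on UNIV (support_fun K)"
proof (rule convex_onI)
  fix t :: real and x z :: 'a
  assume t: "0 < t" "t < 1"
  show "support_fun K ((1 - t) *\<^sub>R x + t *\<^sub>R z) \<le> (1 - t) * support_fun K x + t * support_fun K z"
  proof (rule support_fun_least[OF assms(2)])
    fix y assume "y \<in> K"
    then have "(1 - t) * (x \<bullet> y) + t * (z \<bullet> y) \<le> (1 - t) * support_fun K x + t * support_fun K z"
      using t assms(1) by (intro add_mono mult_left_mono support_fun_upper) auto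
    then show "((1 - t) *\<^sub>R x + t *\<^sub>R z) \<bullet> y \<le> (1 - t) * support_fun K x + t * support_fun K z"
      by (simp add: inner_add_left)
  qed
qed simp

lemma translated_orthogonal_eq_hyperplane:
  fixes u :: "'a::real_inner"
  shows "{xb + w | w. w \<bullet> u = 0} = {z. z \<bullet> u = xb \<bullet> u}"
proof (intro set_eqI iffI)
  fix z assume "z \<in> {z. z \<bullet> u = xb \<bullet> u}"
  then have "z = xb + (z - xb)" "(z - xb) \<bullet> u = 0" by (simp_all add: inner_diff_left)
  then show "z \<in> {xb + w | w. w \<bullet> u = 0}" by blast
qed (auto simp: inner_add_left)

lemma supporting_hyperplane_iff:
  assumes "xb \<in> K"
  shows "supporting_hyperplane K xb u \<longleftrightarrow> u \<noteq> 0 \<and> (\<forall>y\<in>K. y \<bullet> u \<le> xb \<bullet> u)"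
proof
  assume "supporting_hyperplane K xb u"
  then obtain m where "u \<noteq> 0" "\<forall>y\<in>K. y \<bullet> u \<le> m" "{xb + w | w. w \<bullet> u = 0} = {z. z \<bullet> u = m}"
    unfolding supporting_hyperplane_def by blast
  moreover from this(3) have "xb \<bullet> u = m"
    unfolding translated_orthogonal_eq_hyperplane by blast
  ultimately show "u \<noteq> 0 \<and> (\<forall>y\<in>K. y \<bullet> u \<le> xb \<bullet> u)" by blast
next
  assume "u \<noteq> 0 \<and> (\<forall>y\<in>K. y \<bullet> u \<le> xb \<bullet> u)"
  then show "supporting_hyperplane K xb u"
    unfolding supporting_hyperplane_def translated_orthogonal_eq_hyperplane using assms by blast
qed

lemma support_fun_eq_inner_iff_supporting_hyperplane:
  fixes K :: "'a::euclidean_space set"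
  assumes "bounded K" "xb \<in> K" "v \<noteq> 0"
  shows "support_fun K v = v \<bullet> xb \<longleftrightarrow> supporting_hyperplane K xb v"
proof -
  have "support_fun K v = v \<bullet> xb \<longleftrightarrow> (\<forall>y\<in>K. v \<bullet> y \<le> v \<bullet> xb)"
    using assms support_fun_upper[OF assms(1)] support_fun_least[of K v "v \<bullet> xb"]
    by (metis antisym empty_iff)
  then show ?thesis
    using assms by (simp add: supporting_hyperplane_iff inner_commute)
qed

lemma eq_inner_iff_mem_translated_orthogonal:
  fixes v :: "'a::real_inner"
  assumes "v \<bullet> v = 1"
  shows "c = v \<bullet> x \<longleftrightarrow> x \<in> {c *\<^sub>R v + w | w. w \<bullet> v = 0}"
proof
  assume "c = v \<bullet> x"
  then have "x = c *\<^sub>R v + (x - c *\<^sub>R v)" "(x - c *\<^sub>R v) \<bullet> v = 0"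
    using assms by (simp_all add: inner_diff_left inner_commute[of x v])
  then show "x \<in> {c *\<^sub>R v + w | w. w \<bullet> v = 0}" by blast
qed (use assms in \<open>auto simp: inner_add_right inner_commute\<close>)

lemma mem_KF: "z \<in> KF F \<longleftrightarrow> (\<forall>v\<in>sphere 0 1. z \<bullet> v \<le> F v)"
  by (auto simp: KF_def)

lemma zero_mem_KF: "positive_fn F \<Longrightarrow> 0 \<in> KF F"
  by (auto simp: mem_KF positive_fn_def less_imp_le)

lemma KF_nonempty: "positive_fn F \<Longrightarrow> KF F \<noteq> {}"
  using zero_mem_KF by blast

lemma closed_KF: "closed (KF F)"
  unfolding KF_def by (intro closed_INT) (simp add: closed_halfspace_le inner_commute)

lemma bounded_KF:
  fixes F :: "'a::euclidean_space \<Rightarrow> real"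
  shows "bounded (KF F)"
  unfolding bounded_iff
proof (intro exI ballI)
  fix y assume y: "y \<in> KF F"
  have "\<bar>y \<bullet> b\<bar> \<le> \<bar>F b\<bar> + \<bar>F (- b)\<bar>" if "b \<in> Basis" for b
  proof -
    have "b \<in> sphere 0 1" "- b \<in> sphere 0 1" using that by auto
    then have "y \<bullet> b \<le> F b" "y \<bullet> (- b) \<le> F (- b)"
      using y unfolding mem_KF by blast+
    then show ?thesis by auto
  qed
  then have "(\<Sum>b\<in>Basis. \<bar>y \<bullet> b\<bar>) \<le> (\<Sum>b\<in>Basis. \<bar>F b\<bar> + \<bar>F (- b)\<bar>)"
    by (intro sum_mono)
  then show "norm y \<le> (\<Sum>b\<in>Basis. \<bar>F b\<bar> + \<bar>F (- b)\<bar>)"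
    using norm_le_l1[of y] by linarith
qed

lemma homog1_support_fun_KF: "positive_fn F \<Longrightarrow> homog1 (support_fun (KF F))"
  by (intro homog1_support_fun bounded_KF KF_nonempty)

lemma support_fun_KF_le:
  assumes "positive_fn F" "v \<in> sphere 0 1"
  shows "support_fun (KF F) v \<le> F v"
  by (rule support_fun_least[OF KF_nonempty[OF assms(1)]])
    (use assms(2) in \<open>auto simp: mem_KF inner_commute\<close>)

lemma Wop_sphere:
  "w \<in> sphere 0 1 \<Longrightarrow> Wop F w = Inf {F w' / (w \<bullet> w') | w'. w' \<in> sphere 0 1 \<and> w \<bullet> w' > 0}"
  by (auto simp: Wop_def hom_ext_def)

lemma scaleR_mem_KF_iff_le_Wop:
  assumes F: "positive_fn F" and w: "w \<in> sphere 0 1" and "r \<ge> 0"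
  shows "r *\<^sub>R w \<in> KF F \<longleftrightarrow> r \<le> Wop F w"
proof -
  let ?T = "{F w' / (w \<bullet> w') | w'. w' \<in> sphere 0 1 \<and> w \<bullet> w' > 0}"
  have constraint_iff: "(r *\<^sub>R w) \<bullet> w' \<le> F w' \<longleftrightarrow> (w \<bullet> w' > 0 \<longrightarrow> r \<le> F w' / (w \<bullet> w'))"
    if "w' \<in> sphere 0 1" for w'
  proof (cases "w \<bullet> w' > 0")
    case False
    then have "r * (w \<bullet> w') \<le> 0" using \<open>r \<ge> 0\<close> by (simp add: mult_nonneg_nonpos)
    moreover have "F w' > 0" using F that by (simp add: positive_fn_def)
    ultimately show ?thesis using False by simp
  qed (simp add: pos_le_divide_eq)
  have "w \<bullet> w = 1" using w by (simp add: dot_square_norm)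
  then have "?T \<noteq> {}" using w by force
  moreover have "bdd_below ?T"
    using F by (intro bdd_belowI[of _ 0]) (auto simp: positive_fn_def less_imp_le)
  ultimately have "r \<le> Inf ?T \<longleftrightarrow> (\<forall>t\<in>?T. r \<le> t)" by (rule le_cInf_iff)
  also have "\<dots> \<longleftrightarrow> r *\<^sub>R w \<in> KF F" unfolding mem_KF using constraint_iff by blast
  finally show ?thesis using Wop_sphere[OF w] by simp
qed

lemma Wop_nonneg: "positive_fn F \<Longrightarrow> w \<in> sphere 0 1 \<Longrightarrow> 0 \<le> Wop F w"
  using scaleR_mem_KF_iff_le_Wop[of F w 0] zero_mem_KF[of F] by simp

lemma Aop_Wop_eq_support_fun:
  fixes F :: "'a::euclidean_space \<Rightarrow> real"
  assumes F: "positive_fn F" and u: "u \<in> sphere 0 1"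
  shows "Sup {Wop F w * (u \<bullet> w) | w. w \<in> sphere 0 1} = support_fun (KF F) u"
proof -
  let ?B = "{Wop F w * (u \<bullet> w) | w. w \<in> sphere 0 1}"
  have le_support: "b \<le> support_fun (KF F) u" if "b \<in> ?B" for b
  proof -
    obtain w where w: "w \<in> sphere 0 1" "b = u \<bullet> (Wop F w *\<^sub>R w)" using \<open>b \<in> ?B\<close> by auto
    have "Wop F w *\<^sub>R w \<in> KF F"
      using Wop_nonneg[OF F w(1)] scaleR_mem_KF_iff_le_Wop[OF F w(1)] by simp
    then show ?thesis unfolding w(2) by (rule support_fun_upper[OF bounded_KF])
  qed
  then have "bdd_above ?B" by (intro bdd_aboveI)
  have "u \<bullet> y \<le> Sup ?B" if y: "y \<in> KF F" for y
  proof (cases "u \<bullet> y \<le> 0")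
    case True
    have "Wop F u * (u \<bullet> u) \<le> Sup ?B" using u \<open>bdd_above ?B\<close> by (intro cSup_upper) auto
    then show ?thesis using True Wop_nonneg[OF F u] u by (simp add: dot_square_norm)
  next
    case False
    then have "y \<noteq> 0" by auto
    define w where "w = y /\<^sub>R norm y"
    have w: "w \<in> sphere 0 1" "norm y *\<^sub>R w = y" using \<open>y \<noteq> 0\<close> by (auto simp: w_def)
    then have "norm y \<le> Wop F w" using y scaleR_mem_KF_iff_le_Wop[OF F w(1), of "norm y"] by simp
    have uy: "u \<bullet> y = norm y * (u \<bullet> w)" using \<open>y \<noteq> 0\<close> by (simp add: w_def)
    then have "u \<bullet> w > 0" using False by (simp add: not_le zero_less_mult_iff)
    then have "u \<bullet> y \<le> Wop F w * (u \<bullet> w)"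
      unfolding uy using \<open>norm y \<le> Wop F w\<close> by (simp add: mult_right_mono)
    also have "\<dots> \<le> Sup ?B" using w(1) \<open>bdd_above ?B\<close> by (intro cSup_upper) auto
    finally show ?thesis .
  qed
  show ?thesis
  proof (rule antisym)
    show "Sup ?B \<le> support_fun (KF F) u" using u le_support by (intro cSup_least) auto
    show "support_fun (KF F) u \<le> Sup ?B"
      by (rule support_fun_least[OF KF_nonempty[OF F]]) fact
  qed
qed

lemma Dop_eq_support_fun:
  fixes F :: "'a::euclidean_space \<Rightarrow> real"
  assumes F: "positive_fn F"
  shows "Dop F = support_fun (KF F)"
proof
  fix x :: 'a
  show "Dop F x = support_fun (KF F) x"
  proof (cases "x = 0")
    case True
    then show ?thesis
      using KF_nonempty[OF F] by (simp add: Dop_def Aop_def hom_ext_def support_fun_def image_constant_conv)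
  next
    case False
    define u where "u = x /\<^sub>R norm x"
    have u: "u \<in> sphere 0 1" "norm x *\<^sub>R u = x" using False by (auto simp: u_def)
    have "Dop F x = norm x * Sup {Wop F w * (u \<bullet> w) | w. w \<in> sphere 0 1}"
      using False by (simp add: Dop_def Aop_def hom_ext_def u_def)
    also have "\<dots> = norm x * support_fun (KF F) u" unfolding Aop_Wop_eq_support_fun[OF F u(1)] ..
    also have "\<dots> = support_fun (KF F) (norm x *\<^sub>R u)"
      using homog1_support_fun_KF[OF F] by (simp add: homog1_def)
    finally show ?thesis using u(2) by simp
  qed
qed

(* The open ray below (x, G x) misses the epigraph; the separating functional (y, c) cannot be
   vertical, since c = 0 would force y \<bullet> y \<le> 0 via the point (x - y, G (x - y)). *)
lemma convex_on_epigraph_separation: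
  fixes G :: "'a::euclidean_space \<Rightarrow> real"
  assumes "convex_on UNIV G"
  obtains y c where "c > 0" "\<And>z. y \<bullet> x + c * G x \<le> y \<bullet> z + c * G z"
proof -
  let ?R = "{x} \<times> {..<G x}"
  have "convex ?R" by (intro convex_Times) auto
  moreover have "convex (epigraph UNIV G)" using assms by (rule convex_epigraphI)
  moreover have "?R \<noteq> {}" "(x, G x) \<in> epigraph UNIV G" "?R \<inter> epigraph UNIV G = {}"
    by (auto simp: epigraph_def)
  ultimately obtain a b
    where sep: "a \<noteq> 0" "\<forall>p\<in>?R. a \<bullet> p \<le> b" "\<forall>p\<in>epigraph UNIV G. b \<le> a \<bullet> p"
    using separating_hyperplane_sets[of ?R "epigraph UNIV G"] by blast
  obtain y c where a: "a = (y, c)" by (cases a)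
  have "y \<noteq> 0 \<or> c \<noteq> 0" using sep(1) a by (auto simp: zero_prod_def)
  have below: "y \<bullet> x + c * t \<le> b" if "t < G x" for t
    using sep(2) a that by auto
  have above: "b \<le> y \<bullet> z + c * s" if "G z \<le> s" for z s
    using bspec[OF sep(3), of "(z, s)"] a that by (simp add: mem_epigraph)
  have "c * (G x - 1) = c * G x - c" by (simp add: right_diff_distrib)
  then have "c \<ge> 0" using below[of "G x - 1"] above[of x "G x"] by linarith
  moreover have "c \<noteq> 0"
  proof
    assume "c = 0"
    then have "y \<bullet> y \<le> 0"
      using below[of "G x - 1"] above[of "x - y" "G (x - y)"] by (simp add: inner_diff_right)
    then show False using \<open>y \<noteq> 0 \<or> c \<noteq> 0\<close> \<open>c = 0\<close> by (metis inner_gt_zero_iff not_le)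
  qed
  ultimately have "c > 0" by simp
  have "G x \<le> (b - y \<bullet> x) / c"
  proof (rule dense_le)
    fix t assume "t < G x"
    then have "t * c \<le> b - y \<bullet> x" using below[of t] by (simp add: mult.commute)
    then show "t \<le> (b - y \<bullet> x) / c" using \<open>c > 0\<close> by (simp add: pos_le_divide_eq)
  qed
  then have "y \<bullet> x + c * G x \<le> b" using \<open>c > 0\<close> by (simp add: pos_le_divide_eq mult.commute)
  then show thesis using that[OF \<open>c > 0\<close>] above by (meson order_trans order_refl)
qed

lemma convex_on_subgradient:
  fixes G :: "'a::euclidean_space \<Rightarrow> real"
  assumes "convex_on UNIV G"
  obtains g where "\<And>z. G x + g \<bullet> (z - x) \<le> G z"
proof -
  obtain y c where "c > 0" and tangent: "\<And>z. y \<bullet> x + c * G x \<le> y \<bullet> z + c * G z"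
    using convex_on_epigraph_separation[OF assms] by blast
  show thesis
  proof (rule that)
    fix z
    have "(y \<bullet> x - y \<bullet> z) / c \<le> G z - G x"
      using tangent[of z] \<open>c > 0\<close> by (simp add: pos_divide_le_eq right_diff_distrib mult.commute)
    then show "G x + (- (1 / c) *\<^sub>R y) \<bullet> (z - x) \<le> G z"
      by (simp add: inner_diff_right diff_divide_distrib)
  qed
qed

lemma convex_homog1_exact_linear_minorant:
  fixes G :: "'a::euclidean_space \<Rightarrow> real"
  assumes "convex_on UNIV G" "homog1 G"
  obtains g where "g \<bullet> x = G x" "\<And>z. g \<bullet> z \<le> G z"
proof -
  obtain g where g: "\<And>z. G x + g \<bullet> (z - x) \<le> G z"
    using convex_on_subgradient[OF assms(1)] by blast
  have "G 0 = 0" using assms(2)[unfolded homog1_def, rule_format, of 0 0] by simp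
  moreover have "G (2 *\<^sub>R x) = 2 * G x" using assms(2)[unfolded homog1_def, rule_format, of 2 x] by simp
  ultimately have "g \<bullet> x = G x"
    using g[of 0] g[of "2 *\<^sub>R x"] by (simp add: inner_diff_right)
  moreover have "g \<bullet> z \<le> G z" for z using g[of z] \<open>g \<bullet> x = G x\<close> by (simp add: inner_diff_right)
  ultimately show thesis by (rule that)
qed

lemma le_Dop_if_convex_homog1:
  fixes F G :: "'a::euclidean_space \<Rightarrow> real"
  assumes "positive_fn F" "convex_on UNIV G" "homog1 G" "\<And>x. G x \<le> F x"
  shows "G x \<le> Dop F x"
proof -
  obtain g where g: "g \<bullet> x = G x" "\<And>z. g \<bullet> z \<le> G z"
    using convex_homog1_exact_linear_minorant[OF assms(2,3)] by blast
  then have "g \<bullet> w \<le> F w" for w using assms(4)[of w] by (meson order_trans)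
  then have "g \<in> KF F" by (simp add: mem_KF)
  then have "x \<bullet> g \<le> support_fun (KF F) x" by (rule support_fun_upper[OF bounded_KF])
  then show ?thesis using g(1) Dop_eq_support_fun[OF assms(1)] by (simp add: inner_commute)
qed

lemma lsc_diff_continuous:
  assumes "lsc F" "\<And>x. isCont h x"
  shows "lsc (\<lambda>x. F x - h x)"
  unfolding lsc_def
proof (intro allI impI)
  fix x and e :: real
  assume "e > 0"
  then have "eventually (\<lambda>y. F x - e / 2 < F y) (at x)" using assms(1) unfolding lsc_def by simp
  moreover have "eventually (\<lambda>y. dist (h y) (h x) < e / 2) (at x)"
    using assms(2)[of x] \<open>e > 0\<close> unfolding isCont_def by (intro tendstoD) auto
  ultimately show "eventually (\<lambda>y. F x - h x - e < F y - h y) (at x)"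
    by eventually_elim (unfold dist_real_def abs_less_iff, linarith)
qed

lemma lsc_pos_on_compact_bounded_away_from_0:
  fixes F :: "'a::euclidean_space \<Rightarrow> real"
  assumes "lsc F" "compact S" "\<And>x. x \<in> S \<Longrightarrow> 0 < F x"
  obtains d where "d > 0" "\<And>x. x \<in> S \<Longrightarrow> d \<le> F x"
proof -
  have "\<forall>x\<in>S. \<exists>U. open U \<and> x \<in> U \<and> (\<forall>y\<in>U. F x / 2 < F y)"
  proof
    fix x assume x: "x \<in> S"
    have "F x / 2 > 0" using assms(3)[OF x] by simp
    with assms(1) have "eventually (\<lambda>y. F x - F x / 2 < F y) (at x)"
      unfolding lsc_def by blast
    then obtain U where "open U" "x \<in> U" "\<forall>y\<in>U. y \<noteq> x \<longrightarrow> F x / 2 < F y"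
      unfolding eventually_at_topological by auto
    then show "\<exists>U. open U \<and> x \<in> U \<and> (\<forall>y\<in>U. F x / 2 < F y)"
      using assms(3)[OF x] by (intro exI[of _ U]) auto
  qed
  from bchoice[OF this] obtain U
    where U: "\<forall>x\<in>S. open (U x) \<and> x \<in> U x \<and> (\<forall>y\<in>U x. F x / 2 < F y)" ..
  then have "\<And>x. x \<in> S \<Longrightarrow> open (U x)" and "S \<subseteq> (\<Union>x\<in>S. U x)" by auto
  then obtain C where C: "C \<subseteq> S" "finite C" "S \<subseteq> (\<Union>x\<in>C. U x)"
    by (rule compactE_image[OF assms(2)])
  define d where "d = Min (insert 1 ((\<lambda>x. F x / 2) ` C))"
  have "d > 0" unfolding d_def using C(1,2) assms(3) by (subst Min_gr_iff) auto
  moreover have "d \<le> F y" if "y \<in> S" for y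
  proof -
    obtain x where "x \<in> C" "y \<in> U x" using C \<open>y \<in> S\<close> by blast
    then have "d \<le> F x / 2" unfolding d_def using C(2) by (intro Min_le) auto
    moreover have "F x / 2 < F y" using U C(1) \<open>x \<in> C\<close> \<open>y \<in> U x\<close> by blast
    ultimately show ?thesis by linarith
  qed
  ultimately show thesis by (rule that)
qed

lemma frontier_KF_tight_constraint:
  fixes F :: "'a::euclidean_space \<Rightarrow> real"
  assumes "lsc F" "y \<in> frontier (KF F)"
  shows "\<exists>w\<in>sphere 0 1. y \<bullet> w = F w"
proof (rule ccontr)
  assume "\<not> ?thesis"
  moreover have "y \<in> KF F" using assms(2) closed_KF frontier_subset_closed by blast
  ultimately have "\<And>w. w \<in> sphere 0 1 \<Longrightarrow> 0 < F w - y \<bullet> w"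
    by (force simp: mem_KF)
  moreover have "isCont (\<lambda>w. y \<bullet> w) w" for w by (intro continuous_intros)
  ultimately obtain d where "d > 0" and slack: "\<And>w. w \<in> sphere 0 1 \<Longrightarrow> d \<le> F w - y \<bullet> w"
    using lsc_pos_on_compact_bounded_away_from_0[OF lsc_diff_continuous[OF assms(1)] compact_sphere]
    by blast
  have "ball y d \<subseteq> KF F"
  proof
    fix z assume "z \<in> ball y d"
    then have "(z - y) \<bullet> w \<le> d" if "w \<in> sphere 0 1" for w
      using norm_cauchy_schwarz[of "z - y" w] that by (simp add: dist_norm norm_minus_commute)
    then show "z \<in> KF F" using slack by (force simp: mem_KF inner_diff_left)
  qed
  then have "y \<in> interior (KF F)" using \<open>d > 0\<close> mem_interior by blast
  then show False using assms(2) by (simp add: frontier_def)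
qed

lemma Ort_KF_subset_Cont:
  fixes F :: "'a::euclidean_space \<Rightarrow> real"
  assumes "integrand F"
  shows "Ort (KF F) \<subseteq> Cont F"
proof
  fix v assume "v \<in> Ort (KF F)"
  then obtain y where "v \<noteq> 0" and y: "y \<in> frontier (KF F)"
    and normal: "normal_cone (KF F) y \<inter> sphere 0 1 = {v /\<^sub>R norm v}"
    unfolding Ort_def by blast
  have F: "positive_fn F" "lsc F" "homog1 F" using assms by (auto simp: integrand_def)
  have "y \<in> KF F" using y closed_KF frontier_subset_closed by blast
  obtain w where w: "w \<in> sphere 0 1" "y \<bullet> w = F w"
    using frontier_KF_tight_constraint[OF F(2) y] by blast
  then have "w \<in> normal_cone (KF F) y"
    by (auto simp: normal_cone_def mem_KF inner_diff_right inner_commute)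
  then have "w = v /\<^sub>R norm v" using normal w(1) by blast
  then have "norm v *\<^sub>R w = v" using \<open>v \<noteq> 0\<close> by simp
  have "F w = support_fun (KF F) w"
    using support_fun_upper[OF bounded_KF \<open>y \<in> KF F\<close>, of w] support_fun_KF_le[OF F(1) w(1)] w(2)
    by (simp add: inner_commute)
  then have "F (norm v *\<^sub>R w) = support_fun (KF F) (norm v *\<^sub>R w)"
    using F(3) homog1_support_fun_KF[OF F(1)] by (simp add: homog1_def)
  then show "v \<in> Cont F"
    using \<open>norm v *\<^sub>R w = v\<close> by (simp add: Cont_def Dop_eq_support_fun[OF F(1)])
qed

theorem lemma2p3:
  fixes F :: "'a::euclidean_space \<Rightarrow> real"
  assumes "DIM('a) \<ge> 2"
    and "integrand F"
  shows "(\<forall>x. Dop F x = Sup {x \<bullet> y | y. y \<in> KF F})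
       \<and> convex_on UNIV (Dop F)
       \<and> (\<forall>G. convex_on UNIV G \<and> homog1 G \<and> positive_fn G \<and> (\<forall>x. G x \<le> F x)
              \<longrightarrow> (\<forall>x. G x \<le> Dop F x))
       \<and> (\<forall>v \<in> sphere 0 1. \<forall>xb \<in> KF F.
            (Dop F v = v \<bullet> xb \<longleftrightarrow> xb \<in> {Dop F v *\<^sub>R v + w | w. w \<bullet> v = 0})
          \<and> (Dop F v = v \<bullet> xb \<longleftrightarrow> supporting_hyperplane (KF F) xb v))
       \<and> Ort (KF F) \<subseteq> Cont F"
proof -
  have F: "positive_fn F" using assms(2) by (simp add: integrand_def)
  have D: "Dop F = support_fun (KF F)" by (rule Dop_eq_support_fun[OF F])
  show ?thesis
  proof (intro conjI allI impI ballI)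
    show "Dop F x = Sup {x \<bullet> y | y. y \<in> KF F}" for x
      by (simp add: D support_fun_def Setcompr_eq_image)
    show "convex_on UNIV (Dop F)"
      unfolding D by (rule convex_on_support_fun[OF bounded_KF KF_nonempty[OF F]])
    show "G x \<le> Dop F x"
      if "convex_on UNIV G \<and> homog1 G \<and> positive_fn G \<and> (\<forall>x. G x \<le> F x)" for G x
      using that by (intro le_Dop_if_convex_homog1[OF F]) auto
    fix v xb :: 'a assume v: "v \<in> sphere 0 1" and "xb \<in> KF F"
    show "Dop F v = v \<bullet> xb \<longleftrightarrow> xb \<in> {Dop F v *\<^sub>R v + w | w. w \<bullet> v = 0}"
      using v by (intro eq_inner_iff_mem_translated_orthogonal) (simp add: dot_square_norm)
    show "Dop F v = v \<bullet> xb \<longleftrightarrow> supporting_hyperplane (KF F) xb v"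
      unfolding D using v \<open>xb \<in> KF F\<close>
      by (intro support_fun_eq_inner_iff_supporting_hyperplane bounded_KF) auto
  qed (rule Ort_KF_subset_Cont[OF assms(2)])
qed

end
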